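(* Let $\alpha,\beta,\gamma\in\mathbb{Z}_2^n$ and $a,b,c\in\mathbb{Z}_2$. Then (1) $\mathrm{cadp}_c(\alpha,\beta,\gamma)=\mathrm{cadp}_c(\beta,\alpha,\gamma)=\mathrm{cadp}_c(\alpha+2^{n-1},\beta+2^{n-1},\gamma)$; (2) $\mathrm{cadp}_c(\alpha,\beta,\gamma)=\mathrm{cadp}_c(-\alpha,\beta,\gamma)=\mathrm{cadp}_c(\alpha,-\beta,\gamma)$; (3) $\mathrm{cadp}_c(\alpha,\beta,\gamma)=\mathrm{cadp}_{c\oplus1}(\alpha,\beta,-\gamma)$ if $\gamma\neq0$; (4) $\mathrm{padp}_{a,b}(\alpha,\beta,\gamma)=\mathrm{padp}_{a,b}(\alpha,\beta,-\gamma)$; (5) $\mathrm{padp}_{a,b}(-\alpha,\beta,\gamma)=\mathrm{padp}_{a\oplus1,b}(\alpha,\beta,\gamma)$ if $\alpha\ne0$; (6) $\mathrm{padp}_{a,b}(\alpha,-\beta,\gamma)=\mathrm{padp}_{a,b\oplus1}(\alpha,\beta,\gamma)$ if $\beta\ne0$; (7) $\mathrm{padp}_{1,b}(0,\beta,\gamma)=\mathrm{padp}_{a,1}(\alpha,0,\gamma)=\mathrm{cadp}_1(\alpha,\beta,0)=0$.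
   Context: For $x\in\mathbb{Z}_2^n$, $x=(x_0,\dots,x_{n-1})$ is identified with the integer $\sum_i x_i2^{n-1-i}$ ($x_0$ most significant); $+$ and $-$ are modulo $2^n$. Indices $0,\dots,7$ are identified with $\mathbb{Z}_2^3$ via $(p_0,p_1,p_2)\leftrightarrow4p_0+2p_1+p_2$; $e_0,\dots,e_7$ are the standard basis row vectors of $\mathbb{Q}^8$. $A_0$ is $\frac14$ times the $8\times8$ matrix with rows $(4,0,0,1,0,1,1,0)$, $(0,0,0,1,0,1,0,0)$, $(0,0,0,1,0,0,1,0)$, $(0,0,0,1,0,0,0,0)$, $(0,0,0,0,0,1,1,0)$, $(0,0,0,0,0,1,0,0)$, $(0,0,0,0,0,0,1,0)$, $(0,\dots,0)$, and $(A_k)_{i,j}=(A_0)_{i\oplus k,j\oplus k}$. For $\alpha,\beta,\gamma\in\mathbb{Z}_2^n$ let $\omega_i=4\alpha_i+2\beta_i+\gamma_i$. With $L_0=(1,0,1,0,1,0,1,0)$, $L_1=(0,1,0,1,0,1,0,1)$, $L_{0,0}=(1,1,0,0,0,0,0,0)$, $L_{0,1}=(0,0,1,1,0,0,0,0)$, $L_{1,0}=(0,0,0,0,1,1,0,0)$, $L_{1,1}=(0,0,0,0,0,0,1,1)$, define $\mathrm{cadp}_c(\alpha,\beta,\gamma)=L_cA_{\omega_0}\cdots A_{\omega_{n-1}}e_0^T$ and $\mathrm{padp}_{a,b}(\alpha,\beta,\gamma)=L_{a,b}A_{\omega_0}\cdots A_{\omega_{n-1}}e_0^T$. *)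

theory Defs
  imports Main "HOL.Rat"
begin

text \<open>Elements of Z_2^n are represented as naturals x < 2^n; bit i of x
 (x_0 most significant) is bit (n-1-i) of the integer. Elements of Z_2 are naturals 0/1.\<close>

definition xbit :: "nat \<Rightarrow> nat \<Rightarrow> nat \<Rightarrow> nat" where
  "xbit n x i = (if bit x (n - 1 - i) then 1 else 0)"

definition zneg :: "nat \<Rightarrow> nat \<Rightarrow> nat" where
  "zneg n x = (2^n - x) mod 2^n"

definition zadd :: "nat \<Rightarrow> nat \<Rightarrow> nat \<Rightarrow> nat" where
  "zadd n x y = (x + y) mod 2^n"

definition A0list :: "rat list list" where
  "A0list = map (map (\<lambda>k. of_int k / 4))
    [[4,0,0,1,0,1,1,0],
     [0,0,0,1,0,1,0,0],
     [0,0,0,1,0,0,1,0],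
     [0,0,0,1,0,0,0,0],
     [0,0,0,0,0,1,1,0],
     [0,0,0,0,0,1,0,0],
     [0,0,0,0,0,0,1,0],
     [0,0,0,0,0,0,0,0]]"

definition A0 :: "nat \<Rightarrow> nat \<Rightarrow> rat" where
  "A0 i j = A0list ! i ! j"

definition Amat :: "nat \<Rightarrow> nat \<Rightarrow> nat \<Rightarrow> rat" where
  "Amat k i j = A0 (xor i k) (xor j k)"

definition matvec :: "(nat \<Rightarrow> nat \<Rightarrow> rat) \<Rightarrow> (nat \<Rightarrow> rat) \<Rightarrow> nat \<Rightarrow> rat" where
  "matvec M v = (\<lambda>i. \<Sum>j<8. M i j * v j)"

definition e0 :: "nat \<Rightarrow> rat" where
  "e0 = (\<lambda>j. if j = 0 then 1 else 0)"

definition omega :: "nat \<Rightarrow> nat \<Rightarrow> nat \<Rightarrow> nat \<Rightarrow> nat \<Rightarrow> nat" where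
  "omega n \<alpha> \<beta> \<gamma> i = 4 * xbit n \<alpha> i + 2 * xbit n \<beta> i + xbit n \<gamma> i"

definition prodvec :: "nat \<Rightarrow> nat \<Rightarrow> nat \<Rightarrow> nat \<Rightarrow> nat \<Rightarrow> rat" where
  "prodvec n \<alpha> \<beta> \<gamma> =
     foldr (\<lambda>k v. matvec (Amat k) v) (map (omega n \<alpha> \<beta> \<gamma>) [0..<n]) e0"

definition Lc :: "nat \<Rightarrow> rat list" where
  "Lc c = (if c = 0 then [1,0,1,0,1,0,1,0] else [0,1,0,1,0,1,0,1])"

definition Lab :: "nat \<Rightarrow> nat \<Rightarrow> rat list" where
  "Lab a b = (if a = 0 then (if b = 0 then [1,1,0,0,0,0,0,0] else [0,0,1,1,0,0,0,0])
              else (if b = 0 then [0,0,0,0,1,1,0,0] else [0,0,0,0,0,0,1,1]))"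

definition cadp :: "nat \<Rightarrow> nat \<Rightarrow> nat \<Rightarrow> nat \<Rightarrow> nat \<Rightarrow> rat" where
  "cadp n c \<alpha> \<beta> \<gamma> = (\<Sum>j<8. Lc c ! j * prodvec n \<alpha> \<beta> \<gamma> j)"

definition padp :: "nat \<Rightarrow> nat \<Rightarrow> nat \<Rightarrow> nat \<Rightarrow> nat \<Rightarrow> nat \<Rightarrow> rat" where
  "padp n a b \<alpha> \<beta> \<gamma> = (\<Sum>j<8. Lab a b ! j * prodvec n \<alpha> \<beta> \<gamma> j)"

end

theory Submission
  imports Defs
begin

(* Read each digit omega_i < 8 as the triple of bits (alpha_i, beta_i, gamma_i).  Since
   (A_k)_{i,j} = (A_0)_{i xor k, j xor k}, relabelling coordinates by x -> x xor 2^w turns every A_k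
   into A_{k xor 2^w}, and A_0 itself (entry 1 at (0,0) and 1/4 at (i,j) whenever j has two bits set
   and i is a submask of j) is invariant under permutations of the three bit positions.  Swapping two
   words therefore permutes the coordinates of v = A_{omega_0} ... A_{omega_{n-1}} e_0.
   Negating a nonzero word complements its bits above the lowest set bit and keeps the others.  Below
   that bit the partial product vanishes on coordinates having the word's bit set (A_0 is upper
   triangular for the submask order), so the digit at the lowest set bit yields a vector invariant
   under flipping that bit; the complemented high digits then act as a single flip of the output
   coordinate, which L_c and L_{a,b} either ignore or turn into c xor 1, a xor 1, b xor 1.
   Adding 2^{n-1} to alpha and beta only flips two bits of the leading digit, which L_c A_k does not
   see, and a zero word keeps v on the coordinates where L_{1,b}, L_{a,1} and L_1 vanish. *)

section \<open>Three-bit digits and the matrix A_0\<close>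

lemma all_less_8:
  "(\<forall>k<8. P k) \<longleftrightarrow> P 0 \<and> P 1 \<and> P 2 \<and> P 3 \<and> P 4 \<and> P 5 \<and> P 6 \<and> P (7::nat)"
proof
  assume "\<forall>k<8. P k"
  then show "P 0 \<and> P 1 \<and> P 2 \<and> P 3 \<and> P 4 \<and> P 5 \<and> P 6 \<and> P 7" by simp
next
  assume "P 0 \<and> P 1 \<and> P 2 \<and> P 3 \<and> P 4 \<and> P 5 \<and> P 6 \<and> P 7"
  moreover have "k = 0 \<or> k = 1 \<or> k = 2 \<or> k = 3 \<or> k = 4 \<or> k = 5 \<or> k = 6 \<or> k = 7"
    if "k < 8" for k :: nat
    using that by arith
  ultimately show "\<forall>k<8. P k" by auto
qed

lemma less_8_iff_high_bits: "(x::nat) < 8 \<longleftrightarrow> (\<forall>q\<ge>3. \<not> bit x q)"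
proof -
  have "x < 2 ^ 3 \<longleftrightarrow> take_bit 3 x = x" by (simp add: take_bit_nat_eq_self_iff)
  also have "\<dots> \<longleftrightarrow> (\<forall>q\<ge>3. \<not> bit x q)"
    unfolding bit_eq_iff [of "take_bit 3 x" x] bit_take_bit_iff
    by (simp add: possible_bit_def) (use not_less in blast)
  finally show ?thesis by simp
qed

lemma bit_imp_less_3: "(x::nat) < 8 \<Longrightarrow> bit x w \<Longrightarrow> w < 3"
  by (metis less_8_iff_high_bits not_less)

lemma xor_less_8: "i < 8 \<Longrightarrow> k < 8 \<Longrightarrow> xor i k < (8::nat)"
  by (simp add: less_8_iff_high_bits bit_xor_iff)

lemma flip_bit_less_8: "w < 3 \<Longrightarrow> i < 8 \<Longrightarrow> flip_bit w i < (8::nat)"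
  by (auto simp: less_8_iff_high_bits bit_flip_bit_iff)

lemma flip_bit_flip_bit [simp]: "flip_bit w (flip_bit w i) = i" for i :: nat
  by (rule bit_eqI) (auto simp: bit_flip_bit_iff)

lemma xor_flip_bit: "xor (flip_bit w i) k = flip_bit w (xor i k)" for i k :: nat
  by (rule bit_eqI) (auto simp: bit_xor_iff bit_flip_bit_iff)

lemma and_eq_self_iff: "and i j = i \<longleftrightarrow> (\<forall>q. bit i q \<longrightarrow> bit j q)" for i j :: nat
  by (auto simp: bit_eq_iff bit_and_iff)

definition swap_bits :: "nat \<Rightarrow> nat \<Rightarrow> nat \<Rightarrow> nat" where
  "swap_bits u v k = (if bit k u = bit k v then k else flip_bit u (flip_bit v k))"

lemma bit_swap_bits:
  "bit (swap_bits u v k) q \<longleftrightarrow> bit k (if q = u then v else if q = v then u else q)"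
  by (auto simp: swap_bits_def bit_flip_bit_iff)

lemma swap_bits_swap_bits [simp]: "swap_bits u v (swap_bits u v k) = k"
  by (rule bit_eqI) (simp add: bit_swap_bits)

lemma swap_bits_xor: "swap_bits u v (xor i k) = xor (swap_bits u v i) (swap_bits u v k)"
  by (rule bit_eqI) (simp add: bit_swap_bits bit_xor_iff)

lemma swap_bits_0 [simp]: "swap_bits u v 0 = 0"
  by (simp add: swap_bits_def)

lemma swap_bits_eq_0_iff [simp]: "swap_bits u v k = 0 \<longleftrightarrow> k = 0"
  by (metis swap_bits_0 swap_bits_swap_bits)

lemma swap_bits_eq_iff: "swap_bits u v a = swap_bits u v b \<longleftrightarrow> a = b"
  by (metis swap_bits_swap_bits)

lemma swap_bits_and: "swap_bits u v (and i k) = and (swap_bits u v i) (swap_bits u v k)"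
  by (rule bit_eqI) (simp add: bit_swap_bits bit_and_iff)

lemma swap_bits_less_8: "u < 3 \<Longrightarrow> v < 3 \<Longrightarrow> k < 8 \<Longrightarrow> swap_bits u v k < 8"
  by (auto simp: less_8_iff_high_bits bit_swap_bits)

lemma A0_eq:
  assumes "i < 8" "j < 8"
  shows "A0 i j = of_bool (i = 0 \<and> j = 0) + of_bool (j \<in> {3, 5, 6} \<and> and i j = i) / 4"
proof -
  have "\<forall>i<8. \<forall>j<8. A0 i j = of_bool (i = 0 \<and> j = 0) + of_bool (j \<in> {3, 5, 6} \<and> and i j = i) / 4"
    unfolding all_less_8 by (simp add: A0_def A0list_def)
  then show ?thesis using assms by blast
qed

lemma swap_bits_in_3_5_6:
  assumes "u < 3" "v < 3" "j < 8"
  shows "swap_bits u v j \<in> {3, 5, 6} \<longleftrightarrow> j \<in> {3, 5, 6}"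
proof -
  have "\<forall>u\<in>{0, 1, 2}. \<forall>v\<in>{0, 1, 2}. \<forall>j<8. swap_bits u v j \<in> {3, 5, 6} \<longleftrightarrow> j \<in> {3, 5, 6}"
    unfolding all_less_8 by (simp add: swap_bits_def flip_bit_eq_xor bit_iff_odd del: One_nat_def)
  moreover have "u \<in> {0, 1, 2}" "v \<in> {0, 1, 2}" using assms by auto
  ultimately show ?thesis using assms by blast
qed

lemma A0_swap_bits:
  assumes "u < 3" "v < 3" "i < 8" "j < 8"
  shows "A0 (swap_bits u v i) (swap_bits u v j) = A0 i j"
proof -
  have two_bits: "swap_bits u v j \<in> {3, 5, 6} \<longleftrightarrow> j \<in> {3, 5, 6}"
    using assms(1,2,4) by (rule swap_bits_in_3_5_6)
  have submask: "and (swap_bits u v i) (swap_bits u v j) = swap_bits u v i \<longleftrightarrow> and i j = i"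
    by (simp add: swap_bits_and [symmetric] swap_bits_eq_iff)
  have "A0 (swap_bits u v i) (swap_bits u v j) =
      of_bool (swap_bits u v i = 0 \<and> swap_bits u v j = 0) +
      of_bool (swap_bits u v j \<in> {3, 5, 6} \<and> and (swap_bits u v i) (swap_bits u v j) = swap_bits u v i) / 4"
    using assms by (simp add: A0_eq swap_bits_less_8 del: insert_iff)
  also have "\<dots> = A0 i j"
    using assms(3,4) by (simp only: two_bits submask swap_bits_eq_0_iff A0_eq)
  finally show ?thesis .
qed

lemma A0_eq_0:
  assumes "i < 8" "j < 8" "bit i w" "\<not> bit j w"
  shows "A0 i j = 0"
proof -
  have "i \<noteq> 0" using assms(3) by (intro notI) simp
  moreover have "and i j \<noteq> i" using assms(3,4) by (auto simp: and_eq_self_iff)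
  ultimately show ?thesis using assms(1,2) by (simp add: A0_eq)
qed

lemma A0_flip_bit_row:
  assumes "i < 8" "j < 8" "bit j w"
  shows "A0 (flip_bit w i) j = A0 i j"
proof -
  have "flip_bit w i < 8" using assms by (simp add: flip_bit_less_8 bit_imp_less_3)
  moreover have "j \<noteq> 0" using assms(3) by (intro notI) simp
  moreover have "and (flip_bit w i) j = flip_bit w i \<longleftrightarrow> and i j = i"
    using assms(3) by (auto simp: and_eq_self_iff bit_flip_bit_iff)
  ultimately show ?thesis using assms(1,2) by (simp add: A0_eq)
qed

lemma Amat_flip_bit: "Amat (flip_bit w k) (flip_bit w i) (flip_bit w j) = Amat k i j"
proof -
  have "xor (flip_bit w a) (flip_bit w k) = xor a k" for a :: nat
    by (rule bit_eqI) (auto simp: bit_xor_iff bit_flip_bit_iff)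
  then show ?thesis by (simp add: Amat_def)
qed

lemma Amat_swap_bits:
  assumes "u < 3" "v < 3" "k < 8" "i < 8" "j < 8"
  shows "Amat (swap_bits u v k) (swap_bits u v i) (swap_bits u v j) = Amat k i j"
  using assms by (simp add: Amat_def swap_bits_xor [symmetric] A0_swap_bits xor_less_8)

section \<open>Products of the matrices A_k\<close>

definition Aprod :: "nat list \<Rightarrow> (nat \<Rightarrow> rat) \<Rightarrow> nat \<Rightarrow> rat" where
  "Aprod ks = foldr (\<lambda>k. matvec (Amat k)) ks"

lemma Aprod_Nil [simp]: "Aprod [] u = u"
  by (simp add: Aprod_def)

lemma Aprod_Cons [simp]: "Aprod (k # ks) u = matvec (Amat k) (Aprod ks u)"
  by (simp add: Aprod_def)

lemma Aprod_append: "Aprod (ks @ ls) u = Aprod ks (Aprod ls u)"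
  by (simp add: Aprod_def)

lemma matvec_cong: "(\<And>j. j < 8 \<Longrightarrow> u j = v j) \<Longrightarrow> matvec M u = matvec M v"
  unfolding matvec_def by (intro ext sum.cong) auto

lemma Aprod_cong:
  assumes "\<And>j. j < 8 \<Longrightarrow> u j = v j" and "i < 8"
  shows "Aprod ks u i = Aprod ks v i"
  using \<open>i < 8\<close>
proof (induction ks arbitrary: i)
  case Nil
  then show ?case by (simp add: assms(1))
next
  case (Cons k ks)
  then show ?case by (simp add: matvec_cong [of "Aprod ks u" "Aprod ks v"])
qed

lemma matvec_relabel:
  assumes \<sigma>: "bij_betw \<sigma> {..<8} {..<8}" and M: "\<And>j. j < 8 \<Longrightarrow> M' (\<sigma> i) (\<sigma> j) = M i j"
  shows "matvec M' v (\<sigma> i) = matvec M (v \<circ> \<sigma>) i"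
proof -
  have "matvec M' v (\<sigma> i) = (\<Sum>j<8. M' (\<sigma> i) (\<sigma> j) * v (\<sigma> j))"
    unfolding matvec_def by (rule sum.reindex_bij_betw [OF \<sigma>, symmetric])
  also have "\<dots> = matvec M (v \<circ> \<sigma>) i"
    unfolding matvec_def by (simp add: M)
  finally show ?thesis .
qed

lemma Aprod_relabel:
  assumes \<sigma>: "bij_betw \<sigma> {..<8} {..<8}"
    and Amat: "\<And>k i j. k \<in> set ks \<Longrightarrow> i < 8 \<Longrightarrow> j < 8 \<Longrightarrow> Amat (\<sigma> k) (\<sigma> i) (\<sigma> j) = Amat k i j"
    and "i < 8"
  shows "Aprod (map \<sigma> ks) v (\<sigma> i) = Aprod ks (v \<circ> \<sigma>) i"
  using Amat \<open>i < 8\<close>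
proof (induction ks arbitrary: i)
  case Nil
  then show ?case by simp
next
  case (Cons k ks)
  have "Aprod (map \<sigma> (k # ks)) v (\<sigma> i) = matvec (Amat k) (Aprod (map \<sigma> ks) v \<circ> \<sigma>) i"
    using Cons.prems by (simp add: matvec_relabel [OF \<sigma>])
  also have "\<dots> = matvec (Amat k) (Aprod ks (v \<circ> \<sigma>)) i"
    using Cons bij_betwE [OF \<sigma>] by (intro fun_cong [OF matvec_cong]) (simp add: comp_def)
  finally show ?case by (simp add: comp_def)
qed

lemma bij_betw_flip_bit: "w < 3 \<Longrightarrow> bij_betw (flip_bit w) {..<8} {..<8::nat}"
  by (rule bij_betw_byWitness [where f' = "flip_bit w"]) (auto simp: flip_bit_less_8)

lemma bij_betw_swap_bits: "u < 3 \<Longrightarrow> v < 3 \<Longrightarrow> bij_betw (swap_bits u v) {..<8} {..<8}"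
  by (rule bij_betw_byWitness [where f' = "swap_bits u v"]) (auto simp: swap_bits_less_8)

lemma Aprod_flip_bit:
  "w < 3 \<Longrightarrow> i < 8 \<Longrightarrow> Aprod (map (flip_bit w) ks) v (flip_bit w i) = Aprod ks (v \<circ> flip_bit w) i"
  by (rule Aprod_relabel) (simp_all add: bij_betw_flip_bit Amat_flip_bit)

lemma Aprod_swap_bits:
  "u < 3 \<Longrightarrow> v < 3 \<Longrightarrow> \<forall>k\<in>set ks. k < 8 \<Longrightarrow> i < 8 \<Longrightarrow>
    Aprod (map (swap_bits u v) ks) x (swap_bits u v i) = Aprod ks (x \<circ> swap_bits u v) i"
  by (rule Aprod_relabel) (simp_all add: bij_betw_swap_bits Amat_swap_bits)

definition vanishes_on_bit :: "nat \<Rightarrow> (nat \<Rightarrow> rat) \<Rightarrow> bool" where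
  "vanishes_on_bit w u \<longleftrightarrow> (\<forall>j<8. bit j w \<longrightarrow> u j = 0)"

lemma e0_vanishes_on_bit: "vanishes_on_bit w e0"
  by (auto simp: vanishes_on_bit_def e0_def)

lemma matvec_vanishes_on_bit:
  assumes "k < 8" "\<not> bit k w" "vanishes_on_bit w u"
  shows "vanishes_on_bit w (matvec (Amat k) u)"
  unfolding vanishes_on_bit_def
proof (intro allI impI)
  fix i :: nat assume i: "i < 8" "bit i w"
  have "Amat k i j * u j = 0" if "j < 8" for j
  proof (cases "bit j w")
    case True
    then show ?thesis using assms(3) \<open>j < 8\<close> by (simp add: vanishes_on_bit_def)
  next
    case False
    have "A0 (xor i k) (xor j k) = 0"
      using i \<open>j < 8\<close> False assms(1,2) by (intro A0_eq_0 [where w = w]) (simp_all add: xor_less_8 bit_xor_iff)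
    then show ?thesis by (simp add: Amat_def)
  qed
  then show "matvec (Amat k) u i = 0" unfolding matvec_def by (intro sum.neutral) simp
qed

lemma Aprod_vanishes_on_bit:
  "\<forall>k\<in>set ks. k < 8 \<and> \<not> bit k w \<Longrightarrow> vanishes_on_bit w u \<Longrightarrow> vanishes_on_bit w (Aprod ks u)"
  by (induction ks) (simp_all add: matvec_vanishes_on_bit)

lemma matvec_flip_bit_invariant:
  assumes "k < 8" "bit k w" "vanishes_on_bit w u" "i < 8"
  shows "matvec (Amat k) u (flip_bit w i) = matvec (Amat k) u i"
  unfolding matvec_def
proof (rule sum.cong)
  fix j :: nat assume "j \<in> {..<8}"
  show "Amat k (flip_bit w i) j * u j = Amat k i j * u j"
  proof (cases "bit j w")
    case True
    then show ?thesis using assms(3) \<open>j \<in> {..<8}\<close> by (simp add: vanishes_on_bit_def)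
  next
    case False
    then have "bit (xor j k) w" using assms(2) by (simp add: bit_xor_iff)
    then have "A0 (flip_bit w (xor i k)) (xor j k) = A0 (xor i k) (xor j k)"
      using assms(1,4) \<open>j \<in> {..<8}\<close> by (intro A0_flip_bit_row) (simp_all add: xor_less_8)
    then show ?thesis by (simp add: Amat_def xor_flip_bit)
  qed
qed simp

lemma Aprod_flip_bit_prefix:
  assumes k: "k < 8" "bit k w" and zs: "\<forall>z\<in>set zs. z < 8 \<and> \<not> bit z w"
    and u: "vanishes_on_bit w u" and "i < 8"
  shows "Aprod (map (flip_bit w) ps @ k # zs) u i = Aprod (ps @ k # zs) u (flip_bit w i)"
proof -
  have "w < 3" using k by (rule bit_imp_less_3)
  define v where "v = Aprod (k # zs) u"
  have v_flip: "v (flip_bit w j) = v j" if "j < 8" for j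
    unfolding v_def Aprod_Cons using k Aprod_vanishes_on_bit [OF zs u] that
    by (rule matvec_flip_bit_invariant)
  have "Aprod (map (flip_bit w) ps @ k # zs) u i =
      Aprod (map (flip_bit w) ps) v (flip_bit w (flip_bit w i))"
    by (simp add: Aprod_append v_def)
  also have "\<dots> = Aprod ps (v \<circ> flip_bit w) (flip_bit w i)"
    by (rule Aprod_flip_bit) (simp_all add: \<open>w < 3\<close> \<open>i < 8\<close> flip_bit_less_8)
  also have "\<dots> = Aprod ps v (flip_bit w i)"
    using \<open>w < 3\<close> \<open>i < 8\<close> v_flip by (intro Aprod_cong) (simp_all add: flip_bit_less_8)
  also have "\<dots> = Aprod (ps @ k # zs) u (flip_bit w i)"
    by (simp add: Aprod_append v_def)
  finally show ?thesis .
qed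

section \<open>Binary words and their digit sequences\<close>

lemma bit_complement:
  fixes y :: nat
  assumes "y < 2 ^ k"
  shows "bit (2 ^ k - 1 - y) q \<longleftrightarrow> q < k \<and> \<not> bit y q"
proof -
  have "take_bit k (int y) = int y"
    using assms by (simp add: take_bit_int_eq_self_iff)
  then have "take_bit k (not (int y)) = 2 ^ k - 1 - int y"
    using take_bit_not_eq_mask_diff [of k "int y"] by (simp add: mask_eq_exp_minus_1)
  also have "\<dots> = int (2 ^ k - 1 - y)"
    using assms by (simp add: of_nat_diff)
  finally have int_eq: "int (2 ^ k - 1 - y) = take_bit k (not (int y))" ..
  have "bit (2 ^ k - 1 - y) q \<longleftrightarrow> bit (int (2 ^ k - 1 - y)) q"
    by (simp only: bit_of_nat_iff_bit)
  also have "\<dots> \<longleftrightarrow> q < k \<and> \<not> bit y q"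
    unfolding int_eq by (simp add: bit_take_bit_iff bit_not_iff bit_of_nat_iff_bit)
  finally show ?thesis .
qed

lemma bit_exp_mult: "bit (2 ^ k * z) q \<longleftrightarrow> k \<le> q \<and> bit z (q - k)" for z :: nat
  by (metis bit_push_bit_iff_nat push_bit_eq_mult mult.commute)

lemma bit_exp_plus_exp_mult:
  "bit (2 ^ m + 2 ^ Suc m * z) q \<longleftrightarrow> q = m \<or> (m < q \<and> bit z (q - Suc m))" for z :: nat
proof -
  have "bit (2 ^ m + 2 ^ Suc m * z) q \<longleftrightarrow> bit (2 ^ m :: nat) q \<or> bit (2 ^ Suc m * z) q"
    by (rule bit_disjunctive_add_iff) (auto simp only: bit_exp_iff bit_exp_mult)
  then show ?thesis
    unfolding bit_exp_iff bit_exp_mult by auto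
qed

lemma bit_zneg:
  assumes m: "bit x m" "\<forall>q<m. \<not> bit x q" and "x < 2 ^ n"
  shows "bit (zneg n x) q \<longleftrightarrow> (if q \<le> m then bit x q else q < n \<and> \<not> bit x q)"
proof -
  define y where "y = x div 2 ^ Suc m"
  define N :: nat where "N = 2 ^ (n - Suc m)"
  have "take_bit (Suc m) x = 2 ^ m"
    using m by (intro bit_eqI) (auto simp: bit_take_bit_iff bit_exp_iff less_Suc_eq)
  then have x: "x = 2 ^ m + 2 ^ Suc m * y"
    unfolding y_def take_bit_eq_mod by (metis add.commute div_mult_mod_eq mult.commute)
  then have "(2::nat) ^ m < 2 ^ n" using \<open>x < 2 ^ n\<close> by linarith
  then have "m < n" by (simp add: power_less_imp_less_exp)
  then have exp_n: "(2::nat) ^ n = 2 ^ Suc m * N"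
    unfolding N_def power_add [symmetric] by simp
  then have "2 ^ Suc m * y < 2 ^ Suc m * N" using x \<open>x < 2 ^ n\<close> by linarith
  then have "y < N" by simp
  then obtain d where d: "N = Suc (y + d)" using less_imp_Suc_add by blast
  have "zneg n x = 2 ^ n - x"
    using \<open>x < 2 ^ n\<close> x by (simp add: zneg_def)
  also have "\<dots> = 2 ^ m + 2 ^ Suc m * (N - 1 - y)"
    unfolding exp_n x d by (simp add: algebra_simps)
  finally have zneg: "zneg n x = 2 ^ m + 2 ^ Suc m * (N - 1 - y)" .
  have complement: "bit (N - 1 - y) r \<longleftrightarrow> r < n - Suc m \<and> \<not> bit y r" for r
    using \<open>y < N\<close> unfolding N_def by (rule bit_complement)
  have "bit x q \<longleftrightarrow> q = m \<or> (m < q \<and> bit y (q - Suc m))"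
    by (subst x) (rule bit_exp_plus_exp_mult)
  moreover have "bit (zneg n x) q \<longleftrightarrow> q = m \<or> (m < q \<and> q - Suc m < n - Suc m \<and> \<not> bit y (q - Suc m))"
    unfolding zneg bit_exp_plus_exp_mult complement by simp
  ultimately show ?thesis using \<open>m < n\<close> by auto
qed

lemma exists_lowest_bit: "x \<noteq> 0 \<Longrightarrow> \<exists>m. bit x m \<and> (\<forall>q<m. \<not> bit x q)" for x :: nat
  using bit_eq_iff [of x 0] exists_least_iff [of "bit x"] by auto

lemma bit_iff_exp_le: "x < 2 ^ Suc m \<Longrightarrow> bit x m \<longleftrightarrow> 2 ^ m \<le> x" for x :: nat
proof -
  assume "x < 2 ^ Suc m"
  then have "x div 2 ^ m < 2" by (simp add: div_less_iff_less_mult)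
  moreover have "odd z \<longleftrightarrow> 0 < z" if "z < 2" for z :: nat
    using that by (cases z) auto
  ultimately have "odd (x div 2 ^ m) \<longleftrightarrow> 0 < x div 2 ^ m" by blast
  then show ?thesis by (simp add: bit_iff_odd div_greater_zero_iff)
qed

lemma zadd_exp_eq_flip_bit:
  assumes "x < 2 ^ Suc m"
  shows "zadd (Suc m) x (2 ^ m) = flip_bit m x"
proof -
  have "(x + 2 ^ m) mod 2 ^ Suc m = (if bit x m then x - 2 ^ m else x + 2 ^ m)"
    using assms bit_iff_exp_le [OF assms] by (simp add: le_mod_geq)
  moreover have "int (flip_bit m x) = (if bit x m then int x - 2 ^ m else int x + 2 ^ m)"
    by (simp only: of_nat_flip_bit_eq) (simp add: flip_bit_eq_if unset_bit_eq set_bit_eq bit_of_nat_iff_bit)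
  ultimately have "int (zadd (Suc m) x (2 ^ m)) = int (flip_bit m x)"
    using bit_iff_exp_le [OF assms] by (simp add: zadd_def of_nat_diff)
  then show ?thesis by simp
qed

definition digits :: "nat \<Rightarrow> nat \<Rightarrow> nat \<Rightarrow> nat \<Rightarrow> nat list" where
  "digits n \<alpha> \<beta> \<gamma> = map (omega n \<alpha> \<beta> \<gamma>) [0..<n]"

lemma prodvec_eq_Aprod: "prodvec n \<alpha> \<beta> \<gamma> = Aprod (digits n \<alpha> \<beta> \<gamma>) e0"
  by (simp add: prodvec_def Aprod_def digits_def)

lemma bit_digit:
  fixes a b c :: nat
  assumes "a < 2" "b < 2" "c < 2"
  shows "bit (4 * a + 2 * b + c) q \<longleftrightarrow> (q = 2 \<and> a = 1) \<or> (q = 1 \<and> b = 1) \<or> (q = 0 \<and> c = 1)"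
proof -
  have abc: "a \<in> {0, 1}" "b \<in> {0, 1}" "c \<in> {0, 1}" using assms by auto
  consider "q = 0" | "q = 1" | "q = 2" | "3 \<le> q" by linarith
  then show ?thesis
  proof cases
    case 4
    moreover have "4 * a + 2 * b + c < 8" using assms by simp
    ultimately show ?thesis by (simp add: less_8_iff_high_bits)
  qed (use abc in \<open>auto simp: bit_iff_odd\<close>)
qed

lemma omega_less_8: "omega n \<alpha> \<beta> \<gamma> i < 8"
  by (simp add: omega_def xbit_def)

lemma digits_less_8: "k \<in> set (digits n \<alpha> \<beta> \<gamma>) \<Longrightarrow> k < 8"
  by (auto simp: digits_def omega_less_8)

lemma bit_omega:
  "bit (omega n \<alpha> \<beta> \<gamma> i) q \<longleftrightarrow>
    (q = 2 \<and> bit \<alpha> (n - 1 - i)) \<or> (q = 1 \<and> bit \<beta> (n - 1 - i)) \<or> (q = 0 \<and> bit \<gamma> (n - 1 - i))"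
  unfolding omega_def by (subst bit_digit) (simp_all add: xbit_def)

lemma upt_split: "p < n \<Longrightarrow> [0..<n] = [0..<p] @ p # [Suc p..<n]"
  using upt_add_eq_append [of 0 p "n - p"] by (simp add: upt_conv_Cons)

lemma digits_zneg:
  assumes "0 < \<alpha>" "\<alpha> < 2 ^ n"
  obtains ps k zs where
    "digits n \<alpha> \<beta> \<gamma> = ps @ k # zs" "digits n (zneg n \<alpha>) \<beta> \<gamma> = map (flip_bit 2) ps @ k # zs"
    "bit k 2" "\<forall>z\<in>set zs. \<not> bit z 2"
proof -
  obtain m where m: "bit \<alpha> m" "\<forall>q<m. \<not> bit \<alpha> q"
    using exists_lowest_bit assms(1) by blast
  have "m < n"
    using m(1) assms(2) by (metis bit_take_bit_iff take_bit_nat_eq_self_iff)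
  define p where "p = n - 1 - m"
  define \<omega> where "\<omega> = omega n \<alpha> \<beta> \<gamma>"
  have "p < n" using \<open>m < n\<close> by (simp add: p_def)
  have neg: "omega n (zneg n \<alpha>) \<beta> \<gamma> i = (if i < p then flip_bit 2 (\<omega> i) else \<omega> i)" if "i < n" for i
    using that \<open>m < n\<close>
    by (intro bit_eqI) (auto simp: \<omega>_def bit_omega bit_flip_bit_iff bit_zneg [OF m assms(2)] p_def)
  show ?thesis
  proof
    show "digits n \<alpha> \<beta> \<gamma> = map \<omega> [0..<p] @ \<omega> p # map \<omega> [Suc p..<n]"
      using \<open>p < n\<close> by (simp add: digits_def \<omega>_def upt_split)
    have "map (omega n (zneg n \<alpha>) \<beta> \<gamma>) [0..<p] = map (flip_bit 2) (map \<omega> [0..<p])"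
      unfolding map_map by (rule map_cong) (use \<open>p < n\<close> neg in auto)
    moreover have "map (omega n (zneg n \<alpha>) \<beta> \<gamma>) [Suc p..<n] = map \<omega> [Suc p..<n]"
      by (rule map_cong) (use neg in auto)
    ultimately show "digits n (zneg n \<alpha>) \<beta> \<gamma> = map (flip_bit 2) (map \<omega> [0..<p]) @ \<omega> p # map \<omega> [Suc p..<n]"
      using \<open>p < n\<close> neg by (simp add: digits_def upt_split)
    show "bit (\<omega> p) 2"
      using m(1) \<open>m < n\<close> by (simp add: \<omega>_def bit_omega p_def)
    show "\<forall>z\<in>set (map \<omega> [Suc p..<n]). \<not> bit z 2"
      using m(2) by (auto simp: \<omega>_def bit_omega p_def)
  qed
qed

lemma digits_zadd_top:
  assumes "0 < n" "\<alpha> < 2 ^ n" "\<beta> < 2 ^ n"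
  obtains k ks where "digits n \<alpha> \<beta> \<gamma> = k # ks"
    "digits n (zadd n \<alpha> (2 ^ (n - 1))) (zadd n \<beta> (2 ^ (n - 1))) \<gamma> = flip_bit 1 (flip_bit 2 k) # ks"
proof -
  obtain m where n: "n = Suc m" using assms(1) gr0_implies_Suc by blast
  define \<omega> where "\<omega> = omega n \<alpha> \<beta> \<gamma>"
  have top: "omega n (flip_bit m \<alpha>) (flip_bit m \<beta>) \<gamma> i = (if i = 0 then flip_bit 1 (flip_bit 2 (\<omega> i)) else \<omega> i)"
    if "i < n" for i
    using that by (intro bit_eqI) (auto simp: \<omega>_def n bit_omega bit_flip_bit_iff)
  show ?thesis
  proof
    show "digits n \<alpha> \<beta> \<gamma> = \<omega> 0 # map \<omega> [1..<n]"
      by (simp add: digits_def \<omega>_def n upt_conv_Cons del: upt_Suc)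
    have "map (omega n (flip_bit m \<alpha>) (flip_bit m \<beta>) \<gamma>) [1..<n] = map \<omega> [1..<n]"
      by (rule map_cong) (simp_all add: top)
    then show "digits n (zadd n \<alpha> (2 ^ (n - 1))) (zadd n \<beta> (2 ^ (n - 1))) \<gamma> =
        flip_bit 1 (flip_bit 2 (\<omega> 0)) # map \<omega> [1..<n]"
      using assms(2,3) top [of 0]
      by (simp add: digits_def n zadd_exp_eq_flip_bit upt_conv_Cons del: upt_Suc)
  qed
qed

lemma prodvec_vanishes_on_bit:
  assumes "\<And>i. i < n \<Longrightarrow> \<not> bit (omega n \<alpha> \<beta> \<gamma> i) w"
  shows "vanishes_on_bit w (prodvec n \<alpha> \<beta> \<gamma>)"
  unfolding prodvec_eq_Aprod using assms
  by (intro Aprod_vanishes_on_bit e0_vanishes_on_bit) (auto simp: digits_def omega_less_8)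

lemma prodvec_zneg_fst:
  assumes "0 < \<alpha>" "\<alpha> < 2 ^ n" "j < 8"
  shows "prodvec n (zneg n \<alpha>) \<beta> \<gamma> j = prodvec n \<alpha> \<beta> \<gamma> (flip_bit 2 j)"
proof -
  obtain ps k zs where ds: "digits n \<alpha> \<beta> \<gamma> = ps @ k # zs"
    and ds': "digits n (zneg n \<alpha>) \<beta> \<gamma> = map (flip_bit 2) ps @ k # zs"
    and k: "bit k 2" and zs: "\<forall>z\<in>set zs. \<not> bit z 2"
    using assms(1,2) by (rule digits_zneg)
  have "k < 8" "\<forall>z\<in>set zs. z < 8"
    using digits_less_8 [of _ n \<alpha> \<beta> \<gamma>] unfolding ds by auto
  then show ?thesis
    unfolding prodvec_eq_Aprod ds ds' using k zs assms(3) e0_vanishes_on_bit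
    by (intro Aprod_flip_bit_prefix) auto
qed

lemma prodvec_swap_bits:
  assumes "u < 3" "v < 3" "\<And>i. omega n \<alpha>' \<beta>' \<gamma>' i = swap_bits u v (omega n \<alpha> \<beta> \<gamma> i)" "j < 8"
  shows "prodvec n \<alpha>' \<beta>' \<gamma>' j = prodvec n \<alpha> \<beta> \<gamma> (swap_bits u v j)"
proof -
  have "digits n \<alpha>' \<beta>' \<gamma>' = map (swap_bits u v) (digits n \<alpha> \<beta> \<gamma>)"
    by (simp add: digits_def assms(3))
  then have "prodvec n \<alpha>' \<beta>' \<gamma>' j =
      Aprod (map (swap_bits u v) (digits n \<alpha> \<beta> \<gamma>)) e0 (swap_bits u v (swap_bits u v j))"
    by (simp add: prodvec_eq_Aprod)
  also have "\<dots> = Aprod (digits n \<alpha> \<beta> \<gamma>) (e0 \<circ> swap_bits u v) (swap_bits u v j)"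
    by (rule Aprod_swap_bits) (use assms digits_less_8 swap_bits_less_8 in auto)
  also have "\<dots> = prodvec n \<alpha> \<beta> \<gamma> (swap_bits u v j)"
    unfolding prodvec_eq_Aprod by (rule Aprod_cong) (simp_all add: e0_def assms swap_bits_less_8)
  finally show ?thesis .
qed

lemma omega_swap_fst_snd: "omega n \<beta> \<alpha> \<gamma> i = swap_bits 1 2 (omega n \<alpha> \<beta> \<gamma> i)"
  by (rule bit_eqI) (auto simp: bit_omega bit_swap_bits)

lemma omega_swap_fst_thd: "omega n \<gamma> \<beta> \<alpha> i = swap_bits 0 2 (omega n \<alpha> \<beta> \<gamma> i)"
  by (rule bit_eqI) (auto simp: bit_omega bit_swap_bits)

lemma swap_bits_flip_bit: "swap_bits u v (flip_bit v (swap_bits u v j)) = flip_bit u j"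
  by (rule bit_eqI) (auto simp: bit_swap_bits bit_flip_bit_iff)

lemma prodvec_swap_fst_snd: "j < 8 \<Longrightarrow> prodvec n \<beta> \<alpha> \<gamma> j = prodvec n \<alpha> \<beta> \<gamma> (swap_bits 1 2 j)"
  by (rule prodvec_swap_bits [OF _ _ omega_swap_fst_snd]) simp_all

lemma prodvec_swap_fst_thd: "j < 8 \<Longrightarrow> prodvec n \<gamma> \<beta> \<alpha> j = prodvec n \<alpha> \<beta> \<gamma> (swap_bits 0 2 j)"
  by (rule prodvec_swap_bits [OF _ _ omega_swap_fst_thd]) simp_all

lemma prodvec_zneg_snd:
  assumes "0 < \<beta>" "\<beta> < 2 ^ n" "j < 8"
  shows "prodvec n \<alpha> (zneg n \<beta>) \<gamma> j = prodvec n \<alpha> \<beta> \<gamma> (flip_bit 1 j)"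
proof -
  have "prodvec n \<alpha> (zneg n \<beta>) \<gamma> j = prodvec n (zneg n \<beta>) \<alpha> \<gamma> (swap_bits 1 2 j)"
    using assms(3) by (rule prodvec_swap_fst_snd)
  also have "\<dots> = prodvec n \<beta> \<alpha> \<gamma> (flip_bit 2 (swap_bits 1 2 j))"
    using assms by (intro prodvec_zneg_fst) (simp_all add: swap_bits_less_8)
  also have "\<dots> = prodvec n \<alpha> \<beta> \<gamma> (swap_bits 1 2 (flip_bit 2 (swap_bits 1 2 j)))"
    using assms(3) by (intro prodvec_swap_fst_snd) (simp add: flip_bit_less_8 swap_bits_less_8)
  finally show ?thesis by (simp only: swap_bits_flip_bit)
qed

lemma prodvec_zneg_thd:
  assumes "0 < \<gamma>" "\<gamma> < 2 ^ n" "j < 8"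
  shows "prodvec n \<alpha> \<beta> (zneg n \<gamma>) j = prodvec n \<alpha> \<beta> \<gamma> (flip_bit 0 j)"
proof -
  have "prodvec n \<alpha> \<beta> (zneg n \<gamma>) j = prodvec n (zneg n \<gamma>) \<beta> \<alpha> (swap_bits 0 2 j)"
    using assms(3) by (rule prodvec_swap_fst_thd)
  also have "\<dots> = prodvec n \<gamma> \<beta> \<alpha> (flip_bit 2 (swap_bits 0 2 j))"
    using assms by (intro prodvec_zneg_fst) (simp_all add: swap_bits_less_8)
  also have "\<dots> = prodvec n \<alpha> \<beta> \<gamma> (swap_bits 0 2 (flip_bit 2 (swap_bits 0 2 j)))"
    using assms(3) by (intro prodvec_swap_fst_thd) (simp add: flip_bit_less_8 swap_bits_less_8)
  finally show ?thesis by (simp only: swap_bits_flip_bit)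
qed

section \<open>The functionals L_c and L_{a,b}\<close>

lemma Lc_nth: "c < 2 \<Longrightarrow> j < 8 \<Longrightarrow> Lc c ! j = of_bool (bit j 0 \<longleftrightarrow> c = 1)"
proof -
  have "\<forall>c\<in>{0, 1}. \<forall>j<8. Lc c ! j = of_bool (bit j 0 \<longleftrightarrow> c = 1)"
    unfolding all_less_8 by (simp add: Lc_def bit_iff_odd)
  moreover assume "c < 2" "j < 8"
  ultimately show ?thesis by (auto simp: less_2_cases_iff)
qed

lemma Lab_nth:
  "a < 2 \<Longrightarrow> b < 2 \<Longrightarrow> j < 8 \<Longrightarrow>
    Lab a b ! j = of_bool ((bit j 2 \<longleftrightarrow> a = 1) \<and> (bit j 1 \<longleftrightarrow> b = 1))"
proof -
  have "\<forall>a\<in>{0, 1}. \<forall>b\<in>{0, 1}. \<forall>j<8.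
      Lab a b ! j = of_bool ((bit j 2 \<longleftrightarrow> a = 1) \<and> (bit j 1 \<longleftrightarrow> b = 1))"
    unfolding all_less_8 by (simp add: Lab_def bit_iff_odd del: One_nat_def)
  moreover assume "a < 2" "b < 2" "j < 8"
  ultimately show ?thesis by (auto simp: less_2_cases_iff)
qed

lemma Lc_Amat_flip_top:
  assumes "c < 2" "k < 8" "j < 8"
  shows "(\<Sum>i<8. Lc c ! i * Amat (flip_bit 1 (flip_bit 2 k)) i j) = (\<Sum>i<8. Lc c ! i * Amat k i j)"
proof -
  have "\<forall>c\<in>{0, 1}. \<forall>k<8. \<forall>j<8.
      (\<Sum>i<8. Lc c ! i * Amat (flip_bit 1 (flip_bit 2 k)) i j) = (\<Sum>i<8. Lc c ! i * Amat k i j)"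
    unfolding all_less_8
    by (simp add: lessThan_nat_numeral Lc_def Amat_def A0_def A0list_def flip_bit_eq_xor del: One_nat_def)
  then show ?thesis using assms by (auto simp: less_2_cases_iff)
qed

lemma sum_mult_matvec: "(\<Sum>i<8. l i * matvec M w i) = (\<Sum>j<8. (\<Sum>i<8. l i * M i j) * w j)"
  unfolding matvec_def sum_distrib_left sum_distrib_right by (subst sum.swap) (simp add: mult.assoc)

lemma Lc_matvec_flip_top:
  assumes "c < 2" "k < 8"
  shows "(\<Sum>i<8. Lc c ! i * matvec (Amat (flip_bit 1 (flip_bit 2 k))) w i) =
    (\<Sum>i<8. Lc c ! i * matvec (Amat k) w i)"
  unfolding sum_mult_matvec
  by (rule sum.cong [OF refl]) (simp only: Lc_Amat_flip_top assms lessThan_iff)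

lemma sum_8_relabel:
  assumes "bij_betw \<sigma> {..<8} {..<8}"
    and "\<And>j. j < 8 \<Longrightarrow> l' j = l (\<sigma> j)" and "\<And>j. j < 8 \<Longrightarrow> v' j = v (\<sigma> j)"
  shows "(\<Sum>j<8. l' j * v' j) = (\<Sum>j<8. l j * v j)"
proof -
  have "(\<Sum>j<8. l' j * v' j) = (\<Sum>j<8. l (\<sigma> j) * v (\<sigma> j))"
    using assms(2,3) by (intro sum.cong) simp_all
  also have "\<dots> = (\<Sum>j<8. l j * v j)"
    by (rule sum.reindex_bij_betw [OF assms(1)])
  finally show ?thesis .
qed

lemma zneg_0 [simp]: "zneg n 0 = 0"
  by (simp add: zneg_def)

lemma cadp_swap: "c < 2 \<Longrightarrow> cadp n c \<beta> \<alpha> \<gamma> = cadp n c \<alpha> \<beta> \<gamma>"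
  unfolding cadp_def
proof (rule sum_8_relabel [OF bij_betw_swap_bits [of 1 2]])
  show "Lc c ! j = Lc c ! swap_bits 1 2 j" if "c < 2" "j < 8" for j
    using that by (simp add: Lc_nth bit_swap_bits swap_bits_less_8)
  show "prodvec n \<beta> \<alpha> \<gamma> j = prodvec n \<alpha> \<beta> \<gamma> (swap_bits 1 2 j)" if "j < 8" for j
    using that by (rule prodvec_swap_fst_snd)
qed simp_all

lemma cadp_zadd_top:
  assumes "c < 2" "\<alpha> < 2 ^ n" "\<beta> < 2 ^ n"
  shows "cadp n c (zadd n \<alpha> (2 ^ (n - 1))) (zadd n \<beta> (2 ^ (n - 1))) \<gamma> = cadp n c \<alpha> \<beta> \<gamma>"
proof (cases "n = 0")
  case True
  then show ?thesis using assms by (simp add: zadd_def)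
next
  case False
  then obtain k ks where ds: "digits n \<alpha> \<beta> \<gamma> = k # ks"
    and ds': "digits n (zadd n \<alpha> (2 ^ (n - 1))) (zadd n \<beta> (2 ^ (n - 1))) \<gamma> = flip_bit 1 (flip_bit 2 k) # ks"
    using assms(2,3) digits_zadd_top by blast
  have "k < 8" using digits_less_8 [of k n \<alpha> \<beta> \<gamma>] ds by simp
  show ?thesis
    unfolding cadp_def prodvec_eq_Aprod ds ds' Aprod_Cons using assms(1) \<open>k < 8\<close>
    by (rule Lc_matvec_flip_top)
qed

lemma cadp_zneg_fst:
  assumes "c < 2" "\<alpha> < 2 ^ n"
  shows "cadp n c (zneg n \<alpha>) \<beta> \<gamma> = cadp n c \<alpha> \<beta> \<gamma>"
proof (cases "\<alpha> = 0")
  case False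
  show ?thesis unfolding cadp_def
  proof (rule sum_8_relabel [OF bij_betw_flip_bit [of 2]])
    show "Lc c ! j = Lc c ! flip_bit 2 j" if "j < 8" for j
      using that assms(1) by (simp add: Lc_nth bit_flip_bit_iff flip_bit_less_8)
    show "prodvec n (zneg n \<alpha>) \<beta> \<gamma> j = prodvec n \<alpha> \<beta> \<gamma> (flip_bit 2 j)" if "j < 8" for j
      using that False assms(2) by (intro prodvec_zneg_fst) simp_all
  qed simp
qed simp

lemma cadp_zneg_snd:
  assumes "c < 2" "\<beta> < 2 ^ n"
  shows "cadp n c \<alpha> (zneg n \<beta>) \<gamma> = cadp n c \<alpha> \<beta> \<gamma>"
proof (cases "\<beta> = 0")
  case False
  show ?thesis unfolding cadp_def
  proof (rule sum_8_relabel [OF bij_betw_flip_bit [of 1]])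
    show "Lc c ! j = Lc c ! flip_bit 1 j" if "j < 8" for j
      using that assms(1) by (simp add: Lc_nth bit_flip_bit_iff flip_bit_less_8)
    show "prodvec n \<alpha> (zneg n \<beta>) \<gamma> j = prodvec n \<alpha> \<beta> \<gamma> (flip_bit 1 j)" if "j < 8" for j
      using that False assms(2) by (intro prodvec_zneg_snd) simp_all
  qed simp
qed simp

lemma cadp_zneg_thd:
  assumes "c < 2" "0 < \<gamma>" "\<gamma> < 2 ^ n"
  shows "cadp n (xor c 1) \<alpha> \<beta> (zneg n \<gamma>) = cadp n c \<alpha> \<beta> \<gamma>"
  unfolding cadp_def
proof (rule sum_8_relabel [OF bij_betw_flip_bit [of 0]])
  show "Lc (xor c 1) ! j = Lc c ! flip_bit 0 j" if "j < 8" for j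
    using that assms(1) by (auto simp: less_2_cases_iff Lc_nth bit_flip_bit_iff flip_bit_less_8)
  show "prodvec n \<alpha> \<beta> (zneg n \<gamma>) j = prodvec n \<alpha> \<beta> \<gamma> (flip_bit 0 j)" if "j < 8" for j
    using that assms(2,3) by (intro prodvec_zneg_thd)
qed simp

lemma padp_zneg_thd:
  assumes "a < 2" "b < 2" "\<gamma> < 2 ^ n"
  shows "padp n a b \<alpha> \<beta> (zneg n \<gamma>) = padp n a b \<alpha> \<beta> \<gamma>"
proof (cases "\<gamma> = 0")
  case False
  show ?thesis unfolding padp_def
  proof (rule sum_8_relabel [OF bij_betw_flip_bit [of 0]])
    show "Lab a b ! j = Lab a b ! flip_bit 0 j" if "j < 8" for j
      using that assms(1,2) by (simp add: Lab_nth bit_flip_bit_iff flip_bit_less_8)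
    show "prodvec n \<alpha> \<beta> (zneg n \<gamma>) j = prodvec n \<alpha> \<beta> \<gamma> (flip_bit 0 j)" if "j < 8" for j
      using that False assms(3) by (intro prodvec_zneg_thd) simp_all
  qed simp
qed simp

lemma padp_zneg_fst:
  assumes "a < 2" "b < 2" "0 < \<alpha>" "\<alpha> < 2 ^ n"
  shows "padp n a b (zneg n \<alpha>) \<beta> \<gamma> = padp n (xor a 1) b \<alpha> \<beta> \<gamma>"
  unfolding padp_def
proof (rule sum_8_relabel [OF bij_betw_flip_bit [of 2]])
  show "Lab a b ! j = Lab (xor a 1) b ! flip_bit 2 j" if "j < 8" for j
    using that assms(1,2) by (auto simp: less_2_cases_iff Lab_nth bit_flip_bit_iff flip_bit_less_8)
  show "prodvec n (zneg n \<alpha>) \<beta> \<gamma> j = prodvec n \<alpha> \<beta> \<gamma> (flip_bit 2 j)" if "j < 8" for j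
    using that assms(3,4) by (intro prodvec_zneg_fst)
qed simp

lemma padp_zneg_snd:
  assumes "a < 2" "b < 2" "0 < \<beta>" "\<beta> < 2 ^ n"
  shows "padp n a b \<alpha> (zneg n \<beta>) \<gamma> = padp n a (xor b 1) \<alpha> \<beta> \<gamma>"
  unfolding padp_def
proof (rule sum_8_relabel [OF bij_betw_flip_bit [of 1]])
  show "Lab a b ! j = Lab a (xor b 1) ! flip_bit 1 j" if "j < 8" for j
    using that assms(1,2) by (auto simp: less_2_cases_iff Lab_nth bit_flip_bit_iff flip_bit_less_8)
  show "prodvec n \<alpha> (zneg n \<beta>) \<gamma> j = prodvec n \<alpha> \<beta> \<gamma> (flip_bit 1 j)" if "j < 8" for j
    using that assms(3,4) by (intro prodvec_zneg_snd)
qed simp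

lemma padp_fst_0:
  assumes "b < 2"
  shows "padp n 1 b 0 \<beta> \<gamma> = 0"
proof -
  have "vanishes_on_bit 2 (prodvec n 0 \<beta> \<gamma>)"
    by (rule prodvec_vanishes_on_bit) (simp add: bit_omega)
  then show ?thesis
    unfolding padp_def vanishes_on_bit_def using assms by (intro sum.neutral) (auto simp: Lab_nth)
qed

lemma padp_snd_0:
  assumes "a < 2"
  shows "padp n a 1 \<alpha> 0 \<gamma> = 0"
proof -
  have "vanishes_on_bit 1 (prodvec n \<alpha> 0 \<gamma>)"
    by (rule prodvec_vanishes_on_bit) (simp add: bit_omega)
  then show ?thesis
    unfolding padp_def vanishes_on_bit_def using assms by (intro sum.neutral) (auto simp: Lab_nth)
qed

lemma cadp_thd_0: "cadp n 1 \<alpha> \<beta> 0 = 0"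
proof -
  have "vanishes_on_bit 0 (prodvec n \<alpha> \<beta> 0)"
    by (rule prodvec_vanishes_on_bit) (simp add: bit_omega)
  then show ?thesis
    unfolding cadp_def vanishes_on_bit_def by (intro sum.neutral) (auto simp: Lc_nth)
qed

theorem theorem4:
  fixes n \<alpha> \<beta> \<gamma> a b c :: nat
  assumes "\<alpha> < 2^n" and "\<beta> < 2^n" and "\<gamma> < 2^n"
    and "a < 2" and "b < 2" and "c < 2"
  shows
   "(cadp n c \<alpha> \<beta> \<gamma> = cadp n c \<beta> \<alpha> \<gamma> \<and>
     cadp n c \<beta> \<alpha> \<gamma> = cadp n c (zadd n \<alpha> (2^(n-1))) (zadd n \<beta> (2^(n-1))) \<gamma>) \<and>
    (cadp n c \<alpha> \<beta> \<gamma> = cadp n c (zneg n \<alpha>) \<beta> \<gamma> \<and>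
     cadp n c (zneg n \<alpha>) \<beta> \<gamma> = cadp n c \<alpha> (zneg n \<beta>) \<gamma>) \<and>
    (\<gamma> \<noteq> 0 \<longrightarrow> cadp n c \<alpha> \<beta> \<gamma> = cadp n (xor c 1) \<alpha> \<beta> (zneg n \<gamma>)) \<and>
    padp n a b \<alpha> \<beta> \<gamma> = padp n a b \<alpha> \<beta> (zneg n \<gamma>) \<and>
    (\<alpha> \<noteq> 0 \<longrightarrow> padp n a b (zneg n \<alpha>) \<beta> \<gamma> = padp n (xor a 1) b \<alpha> \<beta> \<gamma>) \<and>
    (\<beta> \<noteq> 0 \<longrightarrow> padp n a b \<alpha> (zneg n \<beta>) \<gamma> = padp n a (xor b 1) \<alpha> \<beta> \<gamma>) \<and>
    (padp n 1 b 0 \<beta> \<gamma> = 0 \<and> padp n a 1 \<alpha> 0 \<gamma> = 0 \<and> cadp n 1 \<alpha> \<beta> 0 = 0)"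
  using assms cadp_swap [of c n \<alpha> \<beta> \<gamma>] cadp_swap [of c n \<beta> \<alpha> \<gamma>]
    cadp_zadd_top [of c \<alpha> n \<beta> \<gamma>] cadp_zneg_fst [of c \<alpha> n \<beta> \<gamma>] cadp_zneg_snd [of c \<beta> n \<alpha> \<gamma>] cadp_zneg_thd [of c \<gamma> n \<alpha> \<beta>]
    padp_zneg_thd [of a b \<gamma> n \<alpha> \<beta>] padp_zneg_fst [of a b \<alpha> n \<beta> \<gamma>] padp_zneg_snd [of a b \<beta> n \<alpha> \<gamma>]
    padp_fst_0 [of b n \<beta> \<gamma>] padp_snd_0 [of a n \<alpha> \<gamma>] cadp_thd_0 [of n \<alpha> \<beta>]
  by auto

end
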